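(* Let $G=(V,E)$ be a connected locally finite graph with measure $\mu$ and edge weights $w$ as described in the context, and suppose (i) there is a constant $\mu_0>0$ with $\mu(x)\ge\mu_0$ for all $x\in V$; (ii) $w_{xy}=w_{yx}$ for all $xy\in E$, and there is a constant $D$ with $\sum_{y\sim x}w_{xy}\le D$ for all $x\in V$. Then $W^{1,p}(V)=W_0^{1,p}(V)$ for all $1\le p<+\infty$.
   Context: $G=(V,E)$ is a connected graph with infinitely many vertices in which every vertex has finitely many neighbours; $y\sim x$ means $xy\in E$. A measure $\mu:V\to(0,+\infty)$ is given, and each edge $xy\in E$ carries a weight $w_{xy}>0$. For $u:V\to\mathbb{R}$, $|\nabla u|(x)=\big(\frac{1}{2\mu(x)}\sum_{y\sim x}w_{xy}(u(y)-u(x))^2\big)^{1/2}$, and $\|f\|_p=(\sum_{x\in V}\mu(x)|f(x)|^p)^{1/p}$. $W^{1,p}(V)$ is the space of $u:V\to\mathbb{R}$ with $\|u\|_{W^{1,p}(V)}=\|u\|_p+\||\nabla u|\|_p<\infty$. $C_c(V)$ is the set of finitely supported functions and $W_0^{1,p}(V)$ is the completion (closure in $W^{1,p}(V)$) of $C_c(V)$ under $\|\cdot\|_{W^{1,p}(V)}$. *)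

theory Defs
  imports "HOL-Analysis.Analysis"
begin

text \<open>Vertices are the elements of the type 'a (V = UNIV). The graph is given by a
symmetric adjacency relation E; mu is the measure, w the edge weights.\<close>

definition grad :: "('a \<Rightarrow> 'a \<Rightarrow> bool) \<Rightarrow> ('a \<Rightarrow> real) \<Rightarrow> ('a \<Rightarrow> 'a \<Rightarrow> real)
    \<Rightarrow> ('a \<Rightarrow> real) \<Rightarrow> 'a \<Rightarrow> real" where
  "grad E mu w u x =
     sqrt (1 / (2 * mu x) * (\<Sum>y\<in>{y. E x y}. w x y * (u y - u x)\<^sup>2))"

definition lp_summable :: "('a \<Rightarrow> real) \<Rightarrow> real \<Rightarrow> ('a \<Rightarrow> real) \<Rightarrow> bool" where
  "lp_summable mu p f \<longleftrightarrow> (\<lambda>x. mu x * \<bar>f x\<bar> powr p) summable_on UNIV"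

definition lp_norm :: "('a \<Rightarrow> real) \<Rightarrow> real \<Rightarrow> ('a \<Rightarrow> real) \<Rightarrow> real" where
  "lp_norm mu p f = (\<Sum>\<^sub>\<infinity>x. mu x * \<bar>f x\<bar> powr p) powr (1 / p)"

definition W1p :: "('a \<Rightarrow> 'a \<Rightarrow> bool) \<Rightarrow> ('a \<Rightarrow> real) \<Rightarrow> ('a \<Rightarrow> 'a \<Rightarrow> real)
    \<Rightarrow> real \<Rightarrow> ('a \<Rightarrow> real) set" where
  "W1p E mu w p = {u. lp_summable mu p u \<and> lp_summable mu p (grad E mu w u)}"

definition W1p_norm :: "('a \<Rightarrow> 'a \<Rightarrow> bool) \<Rightarrow> ('a \<Rightarrow> real) \<Rightarrow> ('a \<Rightarrow> 'a \<Rightarrow> real)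
    \<Rightarrow> real \<Rightarrow> ('a \<Rightarrow> real) \<Rightarrow> real" where
  "W1p_norm E mu w p u = lp_norm mu p u + lp_norm mu p (grad E mu w u)"

definition Cc :: "('a \<Rightarrow> real) set" where
  "Cc = {f. finite {x. f x \<noteq> 0}}"

definition W01p :: "('a \<Rightarrow> 'a \<Rightarrow> bool) \<Rightarrow> ('a \<Rightarrow> real) \<Rightarrow> ('a \<Rightarrow> 'a \<Rightarrow> real)
    \<Rightarrow> real \<Rightarrow> ('a \<Rightarrow> real) set" where
  "W01p E mu w p = {u \<in> W1p E mu w p.
      \<forall>\<epsilon>>0. \<exists>\<phi>\<in>Cc. W1p_norm E mu w p (\<lambda>x. u x - \<phi> x) < \<epsilon>}"

end

(* Cut u off outside a large finite set. If the finite set F carries all but a small tail of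
   the series of mu (|u|^p + |grad u|^p), and K is F together with its neighbours, then
   v = u * 1_(V - K) has vanishing gradient on F, while the weighted degree bound and
   mu >= mu0 give grad v <= sqrt (2 + D / mu0) (|u| + grad u) pointwise. So both p-norms
   of v are controlled by the tail, and u - v = u * 1_K is finitely supported because
   the graph is locally finite. *)
theory Submission
  imports Defs
begin

lemma infsum_tail_less:
  fixes g :: "'a \<Rightarrow> real"
  assumes summable: "g summable_on A" and "\<epsilon> > 0"
  obtains F where "finite F" "F \<subseteq> A" "infsum g (A - F) < \<epsilon>"
proof -
  obtain F where F: "finite F" "F \<subseteq> A" and close: "dist (sum g F) (infsum g A) \<le> \<epsilon>/2"
    using infsum_finite_approximation[OF summable, of "\<epsilon>/2"] \<open>\<epsilon> > 0\<close> by auto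
  have "infsum g A = infsum g (F \<union> (A - F))"
    using F(2) by (simp add: Un_absorb1)
  also have "\<dots> = sum g F + infsum g (A - F)"
    using F summable_on_subset[OF summable, of "A - F"] by (subst infsum_Un_disjoint) auto
  finally show ?thesis
    using that F close \<open>\<epsilon> > 0\<close> by (simp add: dist_real_def)
qed

lemma infsum_le_infsum_Compl:
  fixes f g :: "'a \<Rightarrow> real"
  assumes summable: "g summable_on (- F)"
    and nonneg: "\<And>x. 0 \<le> f x"
    and le: "\<And>x. x \<notin> F \<Longrightarrow> f x \<le> g x"
    and vanish: "\<And>x. x \<in> F \<Longrightarrow> f x = 0"
  shows "infsum f UNIV \<le> infsum g (- F)"
proof -
  have "f summable_on (- F)"
    using summable_on_comparison_test[OF summable] le nonneg by auto
  moreover have "infsum f UNIV = infsum f (- F)"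
    using vanish by (intro infsum_cong_neutral) auto
  ultimately show ?thesis
    using summable le by (metis Compl_iff infsum_mono)
qed

lemma powr_add_le:
  fixes a b p :: real
  assumes "0 \<le> a" "0 \<le> b" "0 \<le> p"
  shows "(a + b) powr p \<le> 2 powr p * (a powr p + b powr p)"
proof -
  have "(a + b) powr p \<le> (2 * max a b) powr p"
    using assms by (intro powr_mono2) auto
  also have "\<dots> = 2 powr p * max a b powr p"
    using assms by (simp add: powr_mult)
  also have "max a b powr p \<le> a powr p + b powr p"
    by (simp add: max_def)
  finally show ?thesis
    by (simp add: mult_left_mono)
qed

lemma lp_norm_less:
  assumes "\<And>x. 0 \<le> mu x" and "0 < p" and "0 < \<epsilon>"
    and "(\<Sum>\<^sub>\<infinity>x. mu x * \<bar>f x\<bar> powr p) < \<epsilon> powr p"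
  shows "lp_norm mu p f < \<epsilon>"
proof -
  have "0 \<le> (\<Sum>\<^sub>\<infinity>x. mu x * \<bar>f x\<bar> powr p)"
    using assms(1) by (intro infsum_nonneg) simp
  then have "lp_norm mu p f < (\<epsilon> powr p) powr (1 / p)"
    unfolding lp_norm_def using assms by (intro powr_less_mono2) auto
  also have "\<dots> = \<epsilon>"
    using assms by (simp add: powr_powr)
  finally show ?thesis .
qed

lemma grad_nonneg:
  assumes "\<And>y. E x y \<Longrightarrow> 0 \<le> w x y" and "0 < mu x"
  shows "0 \<le> grad E mu w u x"
  unfolding grad_def
  by (intro real_sqrt_ge_zero mult_nonneg_nonneg sum_nonneg) (use assms in auto)

lemma grad_eq_0_if_vanishes_near:
  assumes "v x = 0" and "\<And>y. E x y \<Longrightarrow> v y = 0"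
  shows "grad E mu w v x = 0"
  unfolding grad_def using assms by simp

lemma grad_cutoff_sq_le:
  assumes w_nonneg: "\<And>y. E x y \<Longrightarrow> 0 \<le> w x y" and mu_pos: "0 < mu x"
    and cutoff: "\<And>y. v y = 0 \<or> v y = u y"
  shows "(grad E mu w v x)\<^sup>2
    \<le> 2 * (grad E mu w u x)\<^sup>2 + (\<Sum>y\<in>{y. E x y}. w x y) / mu x * (u x)\<^sup>2"
proof -
  have grad_sq: "(grad E mu w z x)\<^sup>2 = (\<Sum>y\<in>{y. E x y}. w x y * (z y - z x)\<^sup>2) / (2 * mu x)" for z
  proof -
    have "0 \<le> (\<Sum>y\<in>{y. E x y}. w x y * (z y - z x)\<^sup>2)"
      using w_nonneg by (intro sum_nonneg) auto
    then show ?thesis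
      unfolding grad_def using mu_pos by simp
  qed
  have diff: "(v y - v x)\<^sup>2 \<le> 2 * (u y - u x)\<^sup>2 + 2 * (u x)\<^sup>2" for y
  proof -
    have "(u y)\<^sup>2 \<le> 2 * (u y - u x)\<^sup>2 + 2 * (u x)\<^sup>2"
      using zero_le_power2[of "u y - 2 * u x"] by (simp add: power2_eq_square algebra_simps)
    then show ?thesis
      using cutoff[of x] cutoff[of y] by auto
  qed
  have "(\<Sum>y\<in>{y. E x y}. w x y * (v y - v x)\<^sup>2)
      \<le> (\<Sum>y\<in>{y. E x y}. w x y * (2 * (u y - u x)\<^sup>2 + 2 * (u x)\<^sup>2))"
    using w_nonneg diff by (intro sum_mono mult_left_mono) auto
  also have "\<dots> = 2 * (\<Sum>y\<in>{y. E x y}. w x y * (u y - u x)\<^sup>2) + 2 * (\<Sum>y\<in>{y. E x y}. w x y) * (u x)\<^sup>2"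
    by (simp add: algebra_simps sum.distrib sum_distrib_left sum_distrib_right)
  finally show ?thesis
    unfolding grad_sq using mu_pos by (simp add: field_simps)
qed

lemma grad_cutoff_le:
  assumes w_nonneg: "\<And>y. E x y \<Longrightarrow> 0 \<le> w x y" and mu_pos: "0 < mu x"
    and cutoff: "\<And>y. v y = 0 \<or> v y = u y"
    and weight_le: "(\<Sum>y\<in>{y. E x y}. w x y) / mu x \<le> C"
  shows "grad E mu w v x \<le> sqrt (2 + C) * (\<bar>u x\<bar> + grad E mu w u x)"
proof -
  have "0 \<le> (\<Sum>y\<in>{y. E x y}. w x y) / mu x"
    using w_nonneg mu_pos by (intro divide_nonneg_pos sum_nonneg) auto
  then have C_nonneg: "0 \<le> C"
    using weight_le by linarith
  have grad_u_nonneg: "0 \<le> grad E mu w u x"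
    using w_nonneg mu_pos by (rule grad_nonneg)
  have expand: "2 * b\<^sup>2 + C * a\<^sup>2 \<le> (2 + C) * (a + b)\<^sup>2" if "0 \<le> a" "0 \<le> b" for a b :: real
  proof -
    have "(2 + C) * (a + b)\<^sup>2 = 2 * b\<^sup>2 + C * a\<^sup>2 + (2 * a\<^sup>2 + 4 * a * b + C * (2 * a * b + b\<^sup>2))"
      by (simp add: power2_eq_square algebra_simps)
    moreover have "0 \<le> 2 * a\<^sup>2 + 4 * a * b + C * (2 * a * b + b\<^sup>2)"
      using that C_nonneg by simp
    ultimately show ?thesis
      by linarith
  qed
  have "(\<Sum>y\<in>{y. E x y}. w x y) / mu x * \<bar>u x\<bar>\<^sup>2 \<le> C * \<bar>u x\<bar>\<^sup>2"
    using weight_le by (rule mult_right_mono) simp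
  moreover have "(grad E mu w v x)\<^sup>2
      \<le> 2 * (grad E mu w u x)\<^sup>2 + (\<Sum>y\<in>{y. E x y}. w x y) / mu x * \<bar>u x\<bar>\<^sup>2"
    using grad_cutoff_sq_le[of E x w mu v u] w_nonneg mu_pos cutoff by (simp only: power2_abs)
  ultimately have "(grad E mu w v x)\<^sup>2 \<le> 2 * (grad E mu w u x)\<^sup>2 + C * \<bar>u x\<bar>\<^sup>2"
    by linarith
  also have "\<dots> \<le> (2 + C) * (\<bar>u x\<bar> + grad E mu w u x)\<^sup>2"
    using grad_u_nonneg by (intro expand) auto
  also have "\<dots> = (sqrt (2 + C) * (\<bar>u x\<bar> + grad E mu w u x))\<^sup>2"
    using C_nonneg by (simp add: power_mult_distrib)
  finally show ?thesis
    by (rule power2_le_imp_le) (use C_nonneg grad_u_nonneg in auto)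
qed

lemma grad_cutoff_powr_le:
  assumes w_nonneg: "\<And>y. E x y \<Longrightarrow> 0 \<le> w x y"
    and mu0_pos: "0 < mu0" and mu_lower: "mu0 \<le> mu x"
    and deg_bound: "(\<Sum>y\<in>{y. E x y}. w x y) \<le> D"
    and "0 \<le> p" and cutoff: "\<And>y. v y = 0 \<or> v y = u y"
  shows "grad E mu w v x powr p
    \<le> (2 * sqrt (2 + D / mu0)) powr p * (\<bar>u x\<bar> powr p + grad E mu w u x powr p)"
proof -
  have mu_pos: "0 < mu x"
    using mu0_pos mu_lower by linarith
  have "0 \<le> (\<Sum>y\<in>{y. E x y}. w x y)"
    using w_nonneg by (intro sum_nonneg) auto
  then have "(\<Sum>y\<in>{y. E x y}. w x y) / mu x \<le> D / mu0"
    using deg_bound mu0_pos mu_lower by (intro frac_le) auto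
  then have grad_v_le: "grad E mu w v x \<le> sqrt (2 + D / mu0) * (\<bar>u x\<bar> + grad E mu w u x)"
    using grad_cutoff_le[of E x w mu v u] w_nonneg mu_pos cutoff by blast
  have grad_at_x_nonneg: "0 \<le> grad E mu w z x" for z
    using w_nonneg mu_pos by (rule grad_nonneg)
  have "grad E mu w v x powr p \<le> (sqrt (2 + D / mu0) * (\<bar>u x\<bar> + grad E mu w u x)) powr p"
    using grad_v_le grad_at_x_nonneg \<open>0 \<le> p\<close> by (intro powr_mono2) auto
  also have "\<dots> = sqrt (2 + D / mu0) powr p * (\<bar>u x\<bar> + grad E mu w u x) powr p"
    using grad_at_x_nonneg by (simp add: powr_mult)
  also have "\<dots> \<le> sqrt (2 + D / mu0) powr p * (2 powr p * (\<bar>u x\<bar> powr p + grad E mu w u x powr p))"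
    using grad_at_x_nonneg \<open>0 \<le> p\<close> by (intro mult_left_mono powr_add_le) auto
  also have "\<dots> = (2 * sqrt (2 + D / mu0)) powr p * (\<bar>u x\<bar> powr p + grad E mu w u x powr p)"
    by (simp add: powr_mult)
  finally show ?thesis .
qed

lemma W1p_norm_less:
  assumes "\<And>x. 0 \<le> mu x" and "0 < p" and "0 < \<epsilon>"
    and "(\<Sum>\<^sub>\<infinity>x. mu x * \<bar>v x\<bar> powr p) < (\<epsilon> / 2) powr p"
    and "(\<Sum>\<^sub>\<infinity>x. mu x * \<bar>grad E mu w v x\<bar> powr p) < (\<epsilon> / 2) powr p"
  shows "W1p_norm E mu w p v < \<epsilon>"
proof -
  have "lp_norm mu p v < \<epsilon> / 2"
    by (rule lp_norm_less) (use assms in auto)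
  moreover have "lp_norm mu p (grad E mu w v) < \<epsilon> / 2"
    by (rule lp_norm_less) (use assms in auto)
  ultimately show ?thesis
    unfolding W1p_norm_def by linarith
qed

definition W1p_density :: "('a \<Rightarrow> 'a \<Rightarrow> bool) \<Rightarrow> ('a \<Rightarrow> real) \<Rightarrow> ('a \<Rightarrow> 'a \<Rightarrow> real)
    \<Rightarrow> real \<Rightarrow> ('a \<Rightarrow> real) \<Rightarrow> 'a \<Rightarrow> real" where
  "W1p_density E mu w p u x = mu x * \<bar>u x\<bar> powr p + mu x * \<bar>grad E mu w u x\<bar> powr p"

lemma W1p_density_summable:
  assumes "u \<in> W1p E mu w p"
  shows "W1p_density E mu w p u summable_on UNIV"
  using assms unfolding W1p_density_def W1p_def lp_summable_def by (intro summable_on_add) auto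

lemma cutoff_density_le:
  assumes w_nonneg: "\<And>y. E x y \<Longrightarrow> 0 \<le> w x y"
    and mu0_pos: "0 < mu0" and mu_lower: "mu0 \<le> mu x"
    and deg_bound: "(\<Sum>y\<in>{y. E x y}. w x y) \<le> D"
    and "0 \<le> p" and cutoff: "\<And>y. v y = 0 \<or> v y = u y"
  defines "C \<equiv> (2 * sqrt (2 + D / mu0)) powr p + 1"
  shows "mu x * \<bar>v x\<bar> powr p \<le> C * W1p_density E mu w p u x"
    and "mu x * \<bar>grad E mu w v x\<bar> powr p \<le> C * W1p_density E mu w p u x"
proof -
  have mu_pos: "0 < mu x"
    using mu0_pos mu_lower by linarith
  have abs_grad: "\<bar>grad E mu w z x\<bar> = grad E mu w z x" for z
    using grad_nonneg[of E x w mu z] w_nonneg mu_pos by simp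
  have density_nonneg: "0 \<le> W1p_density E mu w p u x"
    unfolding W1p_density_def using mu_pos by simp
  have le_C_density: "a \<le> C * W1p_density E mu w p u x"
    if "a \<le> M * W1p_density E mu w p u x" "0 \<le> M" "M \<le> C" for a M
    using that density_nonneg mult_right_mono[of M C] by (meson order_trans)
  have "mu x * \<bar>v x\<bar> powr p \<le> 1 * W1p_density E mu w p u x"
    using cutoff[of x] mu_pos by (auto simp: W1p_density_def)
  then show "mu x * \<bar>v x\<bar> powr p \<le> C * W1p_density E mu w p u x"
    by (rule le_C_density) (auto simp: C_def)
  have "grad E mu w v x powr p
      \<le> (2 * sqrt (2 + D / mu0)) powr p * (\<bar>u x\<bar> powr p + grad E mu w u x powr p)"
    using w_nonneg mu0_pos mu_lower deg_bound \<open>0 \<le> p\<close> cutoff by (rule grad_cutoff_powr_le)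
  then have "mu x * \<bar>grad E mu w v x\<bar> powr p
      \<le> mu x * ((2 * sqrt (2 + D / mu0)) powr p * (\<bar>u x\<bar> powr p + grad E mu w u x powr p))"
    using mu_pos by (simp add: abs_grad)
  also have "\<dots> = (2 * sqrt (2 + D / mu0)) powr p * W1p_density E mu w p u x"
    by (simp add: W1p_density_def abs_grad algebra_simps)
  finally have "mu x * \<bar>grad E mu w v x\<bar> powr p
      \<le> (2 * sqrt (2 + D / mu0)) powr p * W1p_density E mu w p u x" .
  then show "mu x * \<bar>grad E mu w v x\<bar> powr p \<le> C * W1p_density E mu w p u x"
    by (rule le_C_density) (auto simp: C_def)
qed

lemma W1p_norm_cutoff_less:
  fixes E :: "'a \<Rightarrow> 'a \<Rightarrow> bool" and mu :: "'a \<Rightarrow> real" and w :: "'a \<Rightarrow> 'a \<Rightarrow> real"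
  assumes w_nonneg: "\<And>x y. E x y \<Longrightarrow> 0 \<le> w x y"
    and mu0_pos: "0 < mu0" and mu_lower: "\<And>x. mu0 \<le> mu x"
    and deg_bound: "\<And>x. (\<Sum>y\<in>{y. E x y}. w x y) \<le> D"
    and "0 < p" and "0 < \<epsilon>" and u: "u \<in> W1p E mu w p"
    and cutoff: "\<And>y. v y = 0 \<or> v y = u y"
    and vanish_near_F: "\<And>x y. x \<in> F \<Longrightarrow> v x = 0 \<and> (E x y \<longrightarrow> v y = 0)"
  defines "C \<equiv> (2 * sqrt (2 + D / mu0)) powr p + 1"
  assumes tail: "(\<Sum>\<^sub>\<infinity>x\<in>- F. C * W1p_density E mu w p u x) < (\<epsilon> / 2) powr p"
  shows "W1p_norm E mu w p v < \<epsilon>"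
proof -
  define g where "g x = C * W1p_density E mu w p u x" for x
  have g_summable: "g summable_on (- F)"
    unfolding g_def using W1p_density_summable[OF u]
    by (intro summable_on_cmult_right) (rule summable_on_subset, auto)
  have mu_nonneg: "0 \<le> mu x" for x
    using mu0_pos mu_lower[of x] by linarith
  note density_le = cutoff_density_le[of E _ w mu0 mu D p v u, folded C_def]
  have "infsum (\<lambda>x. mu x * \<bar>v x\<bar> powr p) UNIV \<le> infsum g (- F)"
  proof (rule infsum_le_infsum_Compl[OF g_summable])
    fix x
    show "0 \<le> mu x * \<bar>v x\<bar> powr p"
      using mu_nonneg[of x] by simp
    show "mu x * \<bar>v x\<bar> powr p \<le> g x"
      unfolding g_def using w_nonneg mu0_pos mu_lower deg_bound \<open>0 < p\<close> cutoff
      by (intro density_le(1)) auto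
    show "x \<in> F \<Longrightarrow> mu x * \<bar>v x\<bar> powr p = 0"
      using vanish_near_F by simp
  qed
  moreover have "infsum (\<lambda>x. mu x * \<bar>grad E mu w v x\<bar> powr p) UNIV \<le> infsum g (- F)"
  proof (rule infsum_le_infsum_Compl[OF g_summable])
    fix x
    show "0 \<le> mu x * \<bar>grad E mu w v x\<bar> powr p"
      using mu_nonneg[of x] by simp
    show "mu x * \<bar>grad E mu w v x\<bar> powr p \<le> g x"
      unfolding g_def using w_nonneg mu0_pos mu_lower deg_bound \<open>0 < p\<close> cutoff
      by (intro density_le(2)) auto
    show "x \<in> F \<Longrightarrow> mu x * \<bar>grad E mu w v x\<bar> powr p = 0"
      using vanish_near_F by (subst grad_eq_0_if_vanishes_near) auto
  qed
  ultimately show ?thesis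
    using tail mu_nonneg \<open>0 < p\<close> \<open>0 < \<epsilon>\<close> unfolding g_def
    by (auto intro!: W1p_norm_less)
qed

lemma Cc_dense_in_W1p:
  fixes E :: "'a \<Rightarrow> 'a \<Rightarrow> bool" and mu :: "'a \<Rightarrow> real" and w :: "'a \<Rightarrow> 'a \<Rightarrow> real"
  assumes locfin: "\<And>x. finite {y. E x y}"
    and w_nonneg: "\<And>x y. E x y \<Longrightarrow> 0 \<le> w x y"
    and mu0_pos: "0 < mu0" and mu_lower: "\<And>x. mu0 \<le> mu x"
    and deg_bound: "\<And>x. (\<Sum>y\<in>{y. E x y}. w x y) \<le> D"
    and "0 < p" and u: "u \<in> W1p E mu w p" and "0 < \<epsilon>"
  shows "\<exists>\<phi>\<in>Cc. W1p_norm E mu w p (\<lambda>x. u x - \<phi> x) < \<epsilon>"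
proof -
  define C where "C = (2 * sqrt (2 + D / mu0)) powr p + 1"
  have "(\<lambda>x. C * W1p_density E mu w p u x) summable_on UNIV"
    using W1p_density_summable[OF u] by (rule summable_on_cmult_right)
  moreover have "0 < (\<epsilon> / 2) powr p"
    using \<open>0 < \<epsilon>\<close> by simp
  ultimately obtain F where "finite F"
    and tail: "(\<Sum>\<^sub>\<infinity>x\<in>UNIV - F. C * W1p_density E mu w p u x) < (\<epsilon> / 2) powr p"
    by (rule infsum_tail_less)
  define K where "K = F \<union> (\<Union>x\<in>F. {y. E x y})"
  define \<phi> where "\<phi> x = (if x \<in> K then u x else 0)" for x
  define v where "v x = (if x \<in> K then 0 else u x)" for x
  have "finite K"
    unfolding K_def using \<open>finite F\<close> locfin by blast
  then have "\<phi> \<in> Cc"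
    unfolding Cc_def \<phi>_def by (auto elim: rev_finite_subset)
  moreover have "W1p_norm E mu w p v < \<epsilon>"
    using tail unfolding C_def
    by (intro W1p_norm_cutoff_less[OF w_nonneg mu0_pos mu_lower deg_bound \<open>0 < p\<close> \<open>0 < \<epsilon>\<close> u])
      (auto simp: v_def K_def Compl_eq_Diff_UNIV)
  moreover have "(\<lambda>x. u x - \<phi> x) = v"
    by (auto simp: \<phi>_def v_def)
  ultimately show ?thesis
    by auto
qed

lemma W01p_eq_W1p:
  fixes E :: "'a \<Rightarrow> 'a \<Rightarrow> bool" and mu :: "'a \<Rightarrow> real" and w :: "'a \<Rightarrow> 'a \<Rightarrow> real"
  assumes locfin: "\<And>x. finite {y. E x y}"
    and w_nonneg: "\<And>x y. E x y \<Longrightarrow> 0 \<le> w x y"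
    and mu0_pos: "0 < mu0" and mu_lower: "\<And>x. mu0 \<le> mu x"
    and deg_bound: "\<And>x. (\<Sum>y\<in>{y. E x y}. w x y) \<le> D"
    and "0 < p"
  shows "W01p E mu w p = W1p E mu w p"
proof -
  have "\<exists>\<phi>\<in>Cc. W1p_norm E mu w p (\<lambda>x. u x - \<phi> x) < \<epsilon>"
    if "u \<in> W1p E mu w p" and "0 < \<epsilon>" for u \<epsilon>
    by (rule Cc_dense_in_W1p[where E = E and mu = mu and w = w]) (use assms that in auto)
  then show ?thesis
    unfolding W01p_def by blast
qed

theorem proposition6p2:
  fixes E :: "'a \<Rightarrow> 'a \<Rightarrow> bool" and mu :: "'a \<Rightarrow> real"
    and w :: "'a \<Rightarrow> 'a \<Rightarrow> real" and mu0 D :: real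
  assumes sym: "\<And>x y. E x y \<Longrightarrow> E y x"
    and irrefl: "\<And>x. \<not> E x x"
    and connected: "\<And>x y. E\<^sup>*\<^sup>* x y"
    and infinite_V: "infinite (UNIV :: 'a set)"
    and locfin: "\<And>x. finite {y. E x y}"
    and mu_pos: "\<And>x. mu x > 0"
    and w_pos: "\<And>x y. E x y \<Longrightarrow> w x y > 0"
    and mu0_pos: "mu0 > 0"
    and mu_lower: "\<And>x. mu x \<ge> mu0"
    and w_sym: "\<And>x y. E x y \<Longrightarrow> w x y = w y x"
    and deg_bound: "\<And>x. (\<Sum>y\<in>{y. E x y}. w x y) \<le> D"
  shows "\<forall>p::real. 1 \<le> p \<longrightarrow> W1p E mu w p = W01p E mu w p"
proof (intro allI impI)
  fix p :: real
  assume "1 \<le> p"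
  have w_nonneg: "\<And>x y. E x y \<Longrightarrow> 0 \<le> w x y"
    using w_pos by (simp add: less_imp_le)
  show "W1p E mu w p = W01p E mu w p"
    using W01p_eq_W1p[OF locfin w_nonneg mu0_pos mu_lower deg_bound] \<open>1 \<le> p\<close> by simp
qed

end
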